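(* Let $\mu$ be critical, let $\xi_1,\dots,\xi_n$ be i.i.d. with law $\mu$, and let $\bar\xi_1,\bar\xi_2,\dots$ be i.i.d. with the size-biased law of $\xi_1$. Then for $1\le m<n$ and any non-negative measurable $f:\mathbb Z^m\to\mathbb R_+$, $$\mathbb E\big[f(\widehat D^n_1,\dots,\widehat D^n_m)\mathbf 1\{N_n\ge m\}\big]=\mathbb E\big[f(\bar\xi_1,\dots,\bar\xi_m)\,\Theta^n(\bar\xi_1,\dots,\bar\xi_m)\big],$$ where for $k_1,\dots,k_m\in\mathbb N$ with $k_1+\dots+k_m\le n-1$, $$\Theta^n(k_1,\dots,k_m)=\frac{\mathbb P\big(\sum_{i=m+1}^n\xi_i=n-1-\sum_{i=1}^mk_i\big)}{\mathbb P\big(\sum_{i=1}^n\xi_i=n-1\big)}\prod_{i=1}^m\frac{n-i+1}{n-1-\sum_{j=1}^{i-1}k_j},$$ and $\Theta^n(k_1,\dots,k_m)=0$ otherwise.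
   Context: $\mu$ is a law on $\mathbb Z_{\ge0}$ with support of gcd $1$; critical means mean $1$; the size-biased law is $\mathbb P(\bar\xi=k)=k\mu_k$. $D^n=(D^n_1,\dots,D^n_n)$ is a vector of i.i.d. $\mu$-distributed variables conditioned on $\sum_iD^n_i=n-1$, and $N_n=|\{i\in[n]:D^n_i>0\}|$. Size-biased random re-ordering of positive numbers $(k_1,\dots,k_N)$: the random permutation $\Sigma$ of $[N]$ with $\mathbb P(\Sigma=\sigma)=\prod_{i=1}^N k_{\sigma(i)}/\sum_{j=i}^Nk_{\sigma(j)}$, giving $(k_{\Sigma(1)},\dots,k_{\Sigma(N)})$. $\widehat D^n=(\widehat D^n_1,\dots,\widehat D^n_{N_n})$ is the size-biased random re-ordering of the positive entries of $D^n$. *)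

theory Defs
  imports "HOL-Probability.Probability" "HOL-Combinatorics.Permutations"
begin

definition critical :: "nat pmf \<Rightarrow> bool" where
  "critical \<mu> \<longleftrightarrow> (\<integral>\<^sup>+ k. ennreal (real k) \<partial>measure_pmf \<mu>) = 1"

definition aperiodic_support :: "nat pmf \<Rightarrow> bool" where
  "aperiodic_support \<mu> \<longleftrightarrow> Gcd (set_pmf \<mu>) = 1"

text \<open>Size-biased law: P(xi_bar = k) = k * mu_k (a probability law when mu is critical).\<close>
definition size_biased :: "nat pmf \<Rightarrow> nat pmf" where
  "size_biased \<mu> = embed_pmf (\<lambda>k. real k * pmf \<mu> k)"

text \<open>Law of (xi_i)_{i in I}, i.i.d. with law mu (0-indexed; value 0 outside I).\<close>
definition iid :: "nat set \<Rightarrow> nat pmf \<Rightarrow> (nat \<Rightarrow> nat) pmf" where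
  "iid I \<mu> = Pi_pmf I 0 (\<lambda>_. \<mu>)"

text \<open>Law of D^n = (D^n_1,...,D^n_n) (stored at indices 0..n-1): i.i.d. mu conditioned on sum = n-1.\<close>
definition Dn_law :: "nat pmf \<Rightarrow> nat \<Rightarrow> (nat \<Rightarrow> nat) pmf" where
  "Dn_law \<mu> n = cond_pmf (iid {..<n} \<mu>) {d. (\<Sum>i<n. d i) = n - 1}"

text \<open>The positive entries of (d_0,...,d_{n-1}) in index order; N_n is its length.\<close>
definition pos_entries :: "nat \<Rightarrow> (nat \<Rightarrow> nat) \<Rightarrow> nat list" where
  "pos_entries n d = filter (\<lambda>k. 0 < k) (map d [0..<n])"

text \<open>Size-biased random re-ordering of ks=(k_1..k_N) (0-indexed): probability that the
  random permutation Sigma of {0..<N} equals sigma.\<close>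
definition sb_perm_prob :: "nat list \<Rightarrow> (nat \<Rightarrow> nat) \<Rightarrow> real" where
  "sb_perm_prob ks \<sigma> =
     (\<Prod>i<length ks. real (ks ! \<sigma> i) / (\<Sum>j\<in>{i..<length ks}. real (ks ! \<sigma> j)))"

text \<open>Theta^n(k_1,...,k_m), with k_1..k_m stored as k 0, ..., k (m-1).\<close>
definition Theta :: "nat pmf \<Rightarrow> nat \<Rightarrow> nat \<Rightarrow> (nat \<Rightarrow> nat) \<Rightarrow> real" where
  "Theta \<mu> n m k =
    (if (\<Sum>i<m. k i) \<le> n - 1 then
       measure_pmf.prob (iid {m..<n} \<mu>) {x. (\<Sum>i\<in>{m..<n}. x i) = n - 1 - (\<Sum>i<m. k i)}
       / measure_pmf.prob (iid {..<n} \<mu>) {x. (\<Sum>i<n. x i) = n - 1}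
       * (\<Prod>i<m. real (n - i) / real (n - 1 - (\<Sum>j<i. k j)))
     else 0)"

end

(*
  Given D^n = d, the first m picks of the size-biased re-ordering form a list (j_1, ..., j_m)
  of distinct coordinates, chosen with probability
  prod_i d_(j_i) / (n - 1 - sum_(l<i) d_(j_l)); coordinates with d_j = 0 are never picked, so
  the restriction to positive entries can be dropped and one sums over all injective index
  lists. Averaging over D^n, i.e. over i.i.d. mu-vectors on the event {sum = n - 1},
  exchangeability makes each of the n (n-1) ... (n-m+1) index lists contribute as much as
  (1, ..., m), and independence factorises the event into the values k of the first m
  coordinates and the event that the other n - m coordinates sum to n - 1 - sum k. The
  numerators k_i of the picking probabilities turn prod_i mu(k_i) into the size-biased law
  prod_i k_i mu(k_i), and what remains is Theta^n.
*)
theory Submission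
  imports Defs "HOL-Combinatorics.Multiset_Permutations"
begin

fun sb_order_prob :: "('a \<Rightarrow> nat) \<Rightarrow> 'a list \<Rightarrow> real" where
  "sb_order_prob w [] = 1"
| "sb_order_prob w (x # xs) = w x / (w x + (\<Sum>y\<leftarrow>xs. real (w y))) * sb_order_prob w xs"

(* Probability that a size-biased ordering of a family of total weight S starts with js. *)
fun sb_prefix_prob :: "('a \<Rightarrow> nat) \<Rightarrow> nat \<Rightarrow> 'a list \<Rightarrow> real" where
  "sb_prefix_prob w S [] = 1"
| "sb_prefix_prob w S (x # xs) = w x / S * sb_prefix_prob w (S - w x) xs"

definition distinct_lists :: "nat \<Rightarrow> 'a set \<Rightarrow> 'a list set" where
  "distinct_lists m R = {xs. length xs = m \<and> distinct xs \<and> set xs \<subseteq> R}"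

lemma distinct_lists_0 [simp]: "distinct_lists 0 R = {[]}"
  by (auto simp: distinct_lists_def)

lemma distinct_lists_Suc:
  "distinct_lists (Suc m) R = (\<Union>x\<in>R. (#) x ` distinct_lists m (R - {x}))"
  by (auto simp: distinct_lists_def length_Suc_conv image_iff)

lemma finite_distinct_lists [simp]: "finite R \<Longrightarrow> finite (distinct_lists m R)"
  unfolding distinct_lists_def
  by (rule finite_subset[OF _ finite_lists_length_eq[of R m]]) auto

lemma distinct_lists_mono: "R \<subseteq> R' \<Longrightarrow> distinct_lists m R \<subseteq> distinct_lists m R'"
  by (auto simp: distinct_lists_def)

lemma length_le_card_if_distinct_lists:
  "xs \<in> distinct_lists m R \<Longrightarrow> finite R \<Longrightarrow> m \<le> card R"
  unfolding distinct_lists_def by (metis (mono_tags) card_mono distinct_card mem_Collect_eq)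

lemma sum_distinct_lists_Suc:
  assumes "finite R"
  shows "(\<Sum>xs\<in>distinct_lists (Suc m) R. F xs) = (\<Sum>x\<in>R. \<Sum>xs\<in>distinct_lists m (R - {x}). F (x # xs))"
  unfolding distinct_lists_Suc using assms
  by (subst sum.UNION_disjoint) (auto simp: sum.reindex)

lemma card_distinct_lists: "finite R \<Longrightarrow> card (distinct_lists m R) = (\<Prod>i<m. card R - i)"
proof (induction m arbitrary: R)
  case (Suc m)
  have "card (distinct_lists (Suc m) R) = (\<Sum>x\<in>R. card (distinct_lists m (R - {x})))"
    using sum_distinct_lists_Suc[OF Suc.prems, where F = "\<lambda>_. 1::nat"] by simp
  also have "\<dots> = (\<Sum>x\<in>R. \<Prod>i<m. card R - Suc i)"
    using Suc by (intro sum.cong) (simp_all add: card_Diff_singleton)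
  finally show ?case
    unfolding prod.lessThan_Suc_shift by simp
qed simp

lemma sum_permutations_of_set_nonempty:
  assumes "finite R" "R \<noteq> {}"
  shows "(\<Sum>xs\<in>permutations_of_set R. F xs) = (\<Sum>x\<in>R. \<Sum>xs\<in>permutations_of_set (R - {x}). F (x # xs))"
  unfolding permutations_of_set_nonempty[OF assms(2)] using assms(1)
  by (subst sum.UNION_disjoint) (auto simp: sum.reindex)

lemma sum_list_permutations_of_set:
  "xs \<in> permutations_of_set R \<Longrightarrow> (\<Sum>y\<leftarrow>xs. real (w y)) = (\<Sum>y\<in>R. w y)"
  by (auto simp: permutations_of_set_def sum_list_distinct_conv_sum_set)

lemma sb_order_prob_Cons:
  assumes "xs \<in> permutations_of_set (R - {x})" "x \<in> R" "finite R"
  shows "sb_order_prob w (x # xs) = w x / (\<Sum>y\<in>R. w y) * sb_order_prob w xs"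
  using assms by (simp add: sum_list_permutations_of_set sum.remove)

lemma sum_sb_order_prob:
  assumes "finite R" "\<And>x. x \<in> R \<Longrightarrow> 0 < w x"
  shows "(\<Sum>xs\<in>permutations_of_set R. sb_order_prob w xs) = 1"
  using assms
proof (induction "card R" arbitrary: R)
  case (Suc c)
  then have "R \<noteq> {}" by auto
  have "(\<Sum>xs\<in>permutations_of_set R. sb_order_prob w xs)
      = (\<Sum>x\<in>R. w x / (\<Sum>y\<in>R. w y) * (\<Sum>xs\<in>permutations_of_set (R - {x}). sb_order_prob w xs))"
    unfolding sum_permutations_of_set_nonempty[OF Suc.prems(1) \<open>R \<noteq> {}\<close>] sum_distrib_left
    using Suc.prems by (intro sum.cong refl) (simp add: sb_order_prob_Cons del: sb_order_prob.simps)
  also have "\<dots> = (\<Sum>x\<in>R. w x / (\<Sum>y\<in>R. w y))"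
  proof (intro sum.cong refl)
    fix x assume "x \<in> R"
    then have "(\<Sum>xs\<in>permutations_of_set (R - {x}). sb_order_prob w xs) = 1"
      using Suc by (intro Suc.hyps(1)) auto
    then show "w x / (\<Sum>y\<in>R. w y) * (\<Sum>xs\<in>permutations_of_set (R - {x}). sb_order_prob w xs)
      = w x / (\<Sum>y\<in>R. w y)" by simp
  qed
  also have "\<dots> = 1"
    using Suc.prems \<open>R \<noteq> {}\<close> sum_pos[of R w]
    by (simp add: sum_divide_distrib[symmetric] del: of_nat_sum) (simp add: ex_in_conv)
  finally show ?case .
qed simp

lemma sum_sb_order_prob_take:
  assumes "finite R" "\<And>x. x \<in> R \<Longrightarrow> 0 < w x" "m \<le> card R"
  shows "(\<Sum>xs\<in>permutations_of_set R. sb_order_prob w xs * g (take m xs))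
       = (\<Sum>js\<in>distinct_lists m R. sb_prefix_prob w (\<Sum>y\<in>R. w y) js * g js)"
  using assms
proof (induction m arbitrary: R g)
  case 0
  then show ?case by (simp add: sum_sb_order_prob flip: sum_distrib_right)
next
  case (Suc m)
  then have "R \<noteq> {}" by auto
  have "(\<Sum>xs\<in>permutations_of_set R. sb_order_prob w xs * g (take (Suc m) xs))
      = (\<Sum>x\<in>R. w x / (\<Sum>y\<in>R. w y) *
           (\<Sum>xs\<in>permutations_of_set (R - {x}). sb_order_prob w xs * g (x # take m xs)))"
    unfolding sum_permutations_of_set_nonempty[OF Suc.prems(1) \<open>R \<noteq> {}\<close>] sum_distrib_left
    using Suc.prems
    by (intro sum.cong refl) (simp add: sb_order_prob_Cons mult.assoc del: sb_order_prob.simps)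
  also have "\<dots> = (\<Sum>x\<in>R. w x / (\<Sum>y\<in>R. w y) *
           (\<Sum>js\<in>distinct_lists m (R - {x}). sb_prefix_prob w (\<Sum>y\<in>R - {x}. w y) js * g (x # js)))"
    using Suc by (intro sum.cong refl arg_cong2[where f = "(*)"] Suc.IH) (auto simp: card_Diff_singleton)
  also have "\<dots> = (\<Sum>x\<in>R. \<Sum>js\<in>distinct_lists m (R - {x}). sb_prefix_prob w (\<Sum>y\<in>R. w y) (x # js) * g (x # js))"
    using Suc.prems by (intro sum.cong refl) (simp add: sum_distrib_left sum.remove mult.assoc)
  also have "\<dots> = (\<Sum>js\<in>distinct_lists (Suc m) R. sb_prefix_prob w (\<Sum>y\<in>R. w y) js * g js)"
    by (rule sum_distinct_lists_Suc[OF Suc.prems(1), symmetric])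
  finally show ?case .
qed

lemma sb_prefix_prob_eq_0: "x \<in> set js \<Longrightarrow> w x = 0 \<Longrightarrow> sb_prefix_prob w S js = 0"
  by (induction js arbitrary: S) auto

lemma sum_sb_order_prob_take_positive:
  assumes "finite R"
  shows "(\<Sum>xs\<in>permutations_of_set {x\<in>R. 0 < w x}.
            sb_order_prob w xs * (if m \<le> length xs then g (take m xs) else 0))
       = (\<Sum>js\<in>distinct_lists m R. sb_prefix_prob w (\<Sum>y\<in>R. w y) js * g js)"
proof -
  define R' where "R' = {x\<in>R. 0 < w x}"
  have "finite R'" using assms by (simp add: R'_def)
  have sum_R': "(\<Sum>y\<in>R'. w y) = (\<Sum>y\<in>R. w y)"
    unfolding R'_def using assms by (intro sum.mono_neutral_left) auto
  have "(\<Sum>xs\<in>permutations_of_set R'. sb_order_prob w xs * (if m \<le> length xs then g (take m xs) else 0))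
      = (\<Sum>js\<in>distinct_lists m R'. sb_prefix_prob w (\<Sum>y\<in>R. w y) js * g js)"
  proof (cases "m \<le> card R'")
    case True
    have "\<And>x. x \<in> R' \<Longrightarrow> 0 < w x" by (simp add: R'_def)
    with True show ?thesis
      using sum_sb_order_prob_take[OF \<open>finite R'\<close>, of w m g]
      by (simp add: sum_R' length_finite_permutations_of_set)
  next
    case False
    then show ?thesis
      using length_le_card_if_distinct_lists[OF _ \<open>finite R'\<close>]
      by (auto simp: length_finite_permutations_of_set intro!: sum.neutral)
  qed
  also have "\<dots> = (\<Sum>js\<in>distinct_lists m R. sb_prefix_prob w (\<Sum>y\<in>R. w y) js * g js)"
  proof (intro sum.mono_neutral_left ballI)
    fix js assume "js \<in> distinct_lists m R - distinct_lists m R'"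
    then obtain x where "x \<in> set js" "w x = 0" by (auto simp: distinct_lists_def R'_def)
    then show "sb_prefix_prob w (\<Sum>y\<in>R. w y) js * g js = 0" by (simp add: sb_prefix_prob_eq_0)
  qed (use assms in \<open>auto simp: R'_def distinct_lists_mono\<close>)
  finally show ?thesis by (simp only: R'_def)
qed

lemma sb_order_prob_conv_prod:
  "sb_order_prob w xs = (\<Prod>i<length xs. w (xs ! i) / (\<Sum>j\<in>{i..<length xs}. real (w (xs ! j))))"
proof (induction xs)
  case (Cons x xs)
  have "(\<Sum>j\<in>{0..<Suc (length xs)}. real (w ((x # xs) ! j))) = w x + (\<Sum>y\<leftarrow>xs. real (w y))"
    by (subst sum.atLeast0_lessThan_Suc_shift) (simp add: sum_list_sum_nth atLeast0LessThan)
  moreover have "(\<Sum>j\<in>{Suc i..<Suc (length xs)}. real (w ((x # xs) ! j)))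
      = (\<Sum>j\<in>{i..<length xs}. real (w (xs ! j)))" for i
    by (simp only: sum.shift_bounds_Suc_ivl) simp
  ultimately show ?case
    by (simp only: length_Cons prod.lessThan_Suc_shift nth_Cons_0 nth_Cons_Suc sb_order_prob.simps Cons.IH)
qed simp

lemma sb_prefix_prob_conv_prod:
  "sb_prefix_prob w S js = (\<Prod>i<length js. w (js ! i) / real (S - (\<Sum>l<i. w (js ! l))))"
proof (induction js arbitrary: S)
  case (Cons x xs)
  have "(\<Sum>l<Suc i. w ((x # xs) ! l)) = w x + (\<Sum>l<i. w (xs ! l))" for i
    by (simp only: sum.lessThan_Suc_shift) simp
  then show ?case
    by (simp only: length_Cons prod.lessThan_Suc_shift)
       (simp add: Cons.IH diff_diff_left del: of_nat_diff sum.lessThan_Suc)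
qed simp

lemma sb_prefix_prob_map:
  "(\<And>j. j \<in> set js \<Longrightarrow> w j = v (p j)) \<Longrightarrow> sb_prefix_prob w S js = sb_prefix_prob v S (map p js)"
  by (induction js arbitrary: S) auto

lemma bij_betw_permutes_map_upt:
  "bij_betw (\<lambda>\<sigma>. map \<sigma> [0..<N]) {\<sigma>. \<sigma> permutes {..<N}} (permutations_of_set {..<N})"
proof (rule bij_betwI')
  fix \<sigma> \<tau> assume "\<sigma> \<in> {\<sigma>. \<sigma> permutes {..<N}}" "\<tau> \<in> {\<sigma>. \<sigma> permutes {..<N}}"
  then have "\<sigma> x = \<tau> x" if "map \<sigma> [0..<N] = map \<tau> [0..<N]" for x
    using that map_eq_conv[of \<sigma> "[0..<N]" \<tau>] by (cases "x < N") (auto simp: permutes_not_in)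
  then show "(map \<sigma> [0..<N] = map \<tau> [0..<N]) = (\<sigma> = \<tau>)" by auto
next
  fix \<sigma> assume "\<sigma> \<in> {\<sigma>. \<sigma> permutes {..<N}}"
  then have "\<sigma> ` {..<N} = {..<N}" "inj_on \<sigma> {..<N}"
    by (auto simp: permutes_image permutes_inj_on)
  then show "map \<sigma> [0..<N] \<in> permutations_of_set {..<N}"
    by (auto simp: permutations_of_set_def distinct_map atLeast0LessThan)
next
  fix xs assume "xs \<in> permutations_of_set {..<N}"
  then have "distinct xs" "set xs = {..<N}" "length xs = N"
    by (auto simp: permutations_of_set_def length_finite_permutations_of_set)
  define \<sigma> where "\<sigma> i = (if i < N then xs ! i else i)" for i
  have "bij_betw ((!) xs) {..<N} {..<N}"
    using bij_betw_nth[OF \<open>distinct xs\<close>] \<open>set xs = {..<N}\<close> \<open>length xs = N\<close> by simp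
  then have "bij_betw \<sigma> {..<N} {..<N}"
    by (rule bij_betw_cong[THEN iffD1, rotated]) (simp add: \<sigma>_def)
  then have "\<sigma> permutes {..<N}" by (rule bij_imp_permutes) (simp add: \<sigma>_def)
  moreover have "xs = map \<sigma> [0..<N]"
    by (rule nth_equalityI) (auto simp: \<open>length xs = N\<close> \<sigma>_def)
  ultimately show "\<exists>\<sigma>\<in>{\<sigma>. \<sigma> permutes {..<N}}. xs = map \<sigma> [0..<N]" by blast
qed

lemma bij_betw_permutes_permutations_of_set:
  assumes "distinct ps"
  shows "bij_betw (\<lambda>\<sigma>. map (\<lambda>i. ps ! \<sigma> i) [0..<length ps])
           {\<sigma>. \<sigma> permutes {..<length ps}} (permutations_of_set (set ps))"
proof -
  have nth: "bij_betw ((!) ps) {..<length ps} (set ps)"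
    by (rule bij_betw_nth[OF assms]) simp_all
  have "bij_betw (map ((!) ps)) (permutations_of_set {..<length ps}) (permutations_of_set (set ps))"
  proof (rule bij_betw_imageI)
    show "inj_on (map ((!) ps)) (permutations_of_set {..<length ps})"
      using nth by (intro inj_on_subset[OF inj_on_map_lists permutations_of_set_lists])
                   (simp add: bij_betw_def)
    show "map ((!) ps) ` permutations_of_set {..<length ps} = permutations_of_set (set ps)"
      using nth unfolding bij_betw_def by (metis permutations_of_set_image_inj)
  qed
  from bij_betw_trans[OF bij_betw_permutes_map_upt this] show ?thesis
    by (simp add: comp_def)
qed

lemma sb_reordering_sum_eq:
  "(\<Sum>\<sigma>\<in>{\<sigma>. \<sigma> permutes {..<length (pos_entries n d)}}.
       sb_perm_prob (pos_entries n d) \<sigma>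
         * (if m \<le> length (pos_entries n d)
            then f (map (\<lambda>i. int (pos_entries n d ! \<sigma> i)) [0..<m]) else 0))
   = (\<Sum>ix\<in>distinct_lists m {..<n}. sb_prefix_prob d (\<Sum>i<n. d i) ix * f (map (\<lambda>i. int (d i)) ix))"
proof -
  define ps where "ps = filter (\<lambda>i. 0 < d i) [0..<n]"
  define order where "order \<sigma> = map (\<lambda>i. ps ! \<sigma> i) [0..<length ps]" for \<sigma> :: "nat \<Rightarrow> nat"
  define F where "F xs = sb_order_prob d xs * (if m \<le> length xs then f (map (\<lambda>i. int (d i)) (take m xs)) else 0)"
    for xs
  have entries: "pos_entries n d = map d ps"
    by (simp add: ps_def pos_entries_def filter_map comp_def)
  have set_ps: "set ps = {i\<in>{..<n}. 0 < d i}"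
    by (auto simp: ps_def)
  have "sb_perm_prob (map d ps) \<sigma> * (if m \<le> length ps then f (map (\<lambda>i. int (map d ps ! \<sigma> i)) [0..<m]) else 0)
      = F (order \<sigma>)" if "\<sigma> permutes {..<length ps}" for \<sigma>
    using permutes_in_image[OF that]
    by (auto simp: F_def order_def sb_perm_prob_def sb_order_prob_conv_prod take_map min_def
             intro!: prod.cong sum.cong arg_cong2[where f = "(*)"] arg_cong[where f = f])
  then have "(\<Sum>\<sigma>\<in>{\<sigma>. \<sigma> permutes {..<length (pos_entries n d)}}.
       sb_perm_prob (pos_entries n d) \<sigma>
         * (if m \<le> length (pos_entries n d)
            then f (map (\<lambda>i. int (pos_entries n d ! \<sigma> i)) [0..<m]) else 0))
      = (\<Sum>\<sigma>\<in>{\<sigma>. \<sigma> permutes {..<length ps}}. F (order \<sigma>))"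
    unfolding entries by (intro sum.cong) simp_all
  also have "\<dots> = (\<Sum>xs\<in>permutations_of_set {i\<in>{..<n}. 0 < d i}. F xs)"
    unfolding order_def set_ps[symmetric]
    by (rule sum.reindex_bij_betw[OF bij_betw_permutes_permutations_of_set]) (simp add: ps_def)
  also have "\<dots> = (\<Sum>ix\<in>distinct_lists m {..<n}. sb_prefix_prob d (\<Sum>i<n. d i) ix * f (map (\<lambda>i. int (d i)) ix))"
    unfolding F_def by (rule sum_sb_order_prob_take_positive) simp
  finally show ?thesis .
qed

definition entries_at :: "nat list \<Rightarrow> (nat \<Rightarrow> nat) \<Rightarrow> nat \<Rightarrow> nat" where
  "entries_at ix d i = (if i < length ix then d (ix ! i) else 0)"

lemma sb_prefix_prob_entries_at:
  "sb_prefix_prob d S ix = sb_prefix_prob (entries_at ix d) S [0..<length ix]"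
  using sb_prefix_prob_map[of "[0..<length ix]" "entries_at ix d" d "(!) ix" S]
  by (simp add: entries_at_def map_nth)

lemma map_entries_at: "map (\<lambda>i. g (d i)) ix = map (\<lambda>i. g (entries_at ix d i)) [0..<length ix]"
  by (rule nth_equalityI) (simp_all add: entries_at_def)

lemma sb_perm_prob_nonneg: "0 \<le> sb_perm_prob ks \<sigma>"
  unfolding sb_perm_prob_def by (intro prod_nonneg divide_nonneg_nonneg sum_nonneg) auto

lemma sb_prefix_prob_nonneg: "0 \<le> sb_prefix_prob w S js"
  by (induction js arbitrary: S) simp_all

lemma sum_sb_reordering_conv_entries_at:
  assumes "\<And>x. 0 \<le> f x"
  shows "(\<Sum>\<sigma>\<in>{\<sigma>. \<sigma> permutes {..<length (pos_entries n d)}}.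
            ennreal (sb_perm_prob (pos_entries n d) \<sigma>
              * (if m \<le> length (pos_entries n d)
                 then f (map (\<lambda>i. int (pos_entries n d ! \<sigma> i)) [0..<m]) else 0)))
       = (\<Sum>ix\<in>distinct_lists m {..<n}.
            ennreal (sb_prefix_prob (entries_at ix d) (\<Sum>i<n. d i) [0..<m]
              * f (map (\<lambda>i. int (entries_at ix d i)) [0..<m])))"
proof -
  have "sb_prefix_prob d (\<Sum>i<n. d i) ix * f (map (\<lambda>i. int (d i)) ix)
      = sb_prefix_prob (entries_at ix d) (\<Sum>i<n. d i) [0..<m] * f (map (\<lambda>i. int (entries_at ix d i)) [0..<m])"
    if "ix \<in> distinct_lists m {..<n}" for ix
    using that sb_prefix_prob_entries_at[of d _ ix] map_entries_at[of int d ix]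
    by (simp add: distinct_lists_def)
  then show ?thesis
    using sb_reordering_sum_eq[of n d m f] assms
    by (simp add: sum_ennreal sb_perm_prob_nonneg sb_prefix_prob_nonneg cong: sum.cong)
qed

lemma permutes_extending_distinct_list:
  assumes "ix \<in> distinct_lists m {..<n}"
  obtains h where "h permutes {..<n}" "\<And>i. i < m \<Longrightarrow> h i = ix ! i"
proof -
  define xs where "xs = ix @ sorted_list_of_set ({..<n} - set ix)"
  have "xs \<in> permutations_of_set {..<n}"
    using assms by (auto simp: xs_def permutations_of_set_def distinct_lists_def)
  then obtain h where h: "h permutes {..<n}" "xs = map h [0..<n]"
    using bij_betw_permutes_map_upt[of n] by (auto simp: bij_betw_def)
  have "h i = ix ! i" if "i < m" for i
  proof -
    have "i < length ix" "length xs = n" using that assms h(2) by (auto simp: distinct_lists_def)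
    then show ?thesis
      using arg_cong[OF h(2), of "\<lambda>xs. xs ! i"] by (simp add: xs_def nth_append)
  qed
  with h(1) show ?thesis by (rule that)
qed

lemma nn_integral_cond_pmf:
  assumes "0 < measure_pmf.prob p A"
  shows "(\<integral>\<^sup>+x. G x \<partial>cond_pmf p A) = (\<integral>\<^sup>+x. indicator A x * G x \<partial>p) / ennreal (measure_pmf.prob p A)"
proof -
  have "set_pmf p \<inter> A \<noteq> {}"
    using assms measure_Int_set_pmf[of p A] by (auto simp: Int_commute)
  then have "ennreal (pmf (cond_pmf p A) x) * G x
      = ennreal (pmf p x) * (indicator A x * G x) / ennreal (measure_pmf.prob p A)" for x
    using assms
    by (cases "x \<in> A") (simp_all add: pmf_cond divide_ennreal[symmetric] ennreal_divide_times ennreal_times_divide)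
  then show ?thesis by (simp add: nn_integral_divide nn_integral_measure_pmf)
qed

lemma nn_integral_iid_permute:
  assumes "h permutes I" "finite I"
  shows "(\<integral>\<^sup>+d. F (d \<circ> h) \<partial>iid I \<mu>) = (\<integral>\<^sup>+d. F d \<partial>iid I \<mu>)"
proof -
  have "iid I \<mu> = map_pmf (\<lambda>d. d \<circ> h) (iid I \<mu>)"
    unfolding iid_def using assms
    by (intro Pi_pmf_bij_betw) (auto simp: permutes_imp_bij permutes_not_in)
  then show ?thesis by (metis nn_integral_map_pmf)
qed

lemma nn_integral_iid_prefix:
  assumes "m \<le> n"
  shows "(\<integral>\<^sup>+d. indicator {d. (\<Sum>i<n. d i) = s} d * G (entries_at [0..<m] d) \<partial>iid {..<n} \<mu>)
       = (\<integral>\<^sup>+k. G k * emeasure (iid {m..<n} \<mu>) {x. (\<Sum>i<m. k i) + (\<Sum>i\<in>{m..<n}. x i) = s}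
            \<partial>iid {..<m} \<mu>)"
proof -
  define merge :: "(nat \<Rightarrow> nat) \<times> (nat \<Rightarrow> nat) \<Rightarrow> nat \<Rightarrow> nat"
    where "merge = (\<lambda>(a, b) i. if i \<in> {..<m} then a i else b i)"
  have "iid {..<n} \<mu> = map_pmf merge (pair_pmf (iid {..<m} \<mu>) (iid {m..<n} \<mu>))"
    using Pi_pmf_union[of "{..<m}" "{m..<n}" 0 "\<lambda>_. \<mu>"] assms
    by (simp add: iid_def merge_def ivl_disj_un_one(2) ivl_disj_int_one(2))
  moreover have "(\<Sum>i<n. merge (a, b) i) = (\<Sum>i<m. a i) + (\<Sum>i\<in>{m..<n}. b i)" for a b
    using sum.atLeastLessThan_concat[of 0 m n "merge (a, b)"] assms
    by (simp add: merge_def atLeast0LessThan)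
  moreover have "entries_at [0..<m] (merge (a, b)) = a" if "a \<in> set_pmf (iid {..<m} \<mu>)" for a b
    using set_Pi_pmf_subset[of "{..<m}" 0 "\<lambda>_. \<mu>"] that
    by (auto simp: iid_def entries_at_def merge_def fun_eq_iff subset_iff)
  ultimately have "(\<integral>\<^sup>+d. indicator {d. (\<Sum>i<n. d i) = s} d * G (entries_at [0..<m] d) \<partial>iid {..<n} \<mu>)
      = (\<integral>\<^sup>+a. \<integral>\<^sup>+b. G a * indicator {x. (\<Sum>i<m. a i) + (\<Sum>i\<in>{m..<n}. x i) = s} b
           \<partial>iid {m..<n} \<mu> \<partial>iid {..<m} \<mu>)"
    by (auto simp: nn_integral_pair_pmf' AE_measure_pmf_iff mult.commute split: split_indicator
             intro!: nn_integral_cong_AE)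
  then show ?thesis by (simp add: nn_integral_cmult)
qed

lemma nn_integral_iid_sum_entries_at:
  assumes "m \<le> n"
  shows "(\<integral>\<^sup>+d. indicator {d. (\<Sum>i<n. d i) = s} d * (\<Sum>ix\<in>distinct_lists m {..<n}. G (entries_at ix d))
            \<partial>iid {..<n} \<mu>)
       = of_nat (\<Prod>i<m. n - i)
         * (\<integral>\<^sup>+k. G k * emeasure (iid {m..<n} \<mu>) {x. (\<Sum>i<m. k i) + (\<Sum>i\<in>{m..<n}. x i) = s}
              \<partial>iid {..<m} \<mu>)"
proof -
  define A where "A = {d::nat \<Rightarrow> nat. (\<Sum>i<n. d i) = s}"
  have "(\<integral>\<^sup>+d. indicator A d * G (entries_at ix d) \<partial>iid {..<n} \<mu>)
      = (\<integral>\<^sup>+d. indicator A d * G (entries_at [0..<m] d) \<partial>iid {..<n} \<mu>)"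
    if ix: "ix \<in> distinct_lists m {..<n}" for ix
  proof -
    obtain h where h: "h permutes {..<n}" "\<And>i. i < m \<Longrightarrow> h i = ix ! i"
      using permutes_extending_distinct_list[OF ix] by blast
    have "entries_at [0..<m] (d \<circ> h) = entries_at ix d" for d
      using ix h(2) by (auto simp: entries_at_def distinct_lists_def)
    moreover have "indicator A (d \<circ> h) = (indicator A d :: ennreal)" for d
      using sum.permute[OF h(1), of d] by (simp add: A_def split: split_indicator)
    ultimately show ?thesis
      using nn_integral_iid_permute[OF h(1), where F = "\<lambda>d. indicator A d * G (entries_at [0..<m] d)"] by simp
  qed
  then have "(\<integral>\<^sup>+d. indicator A d * (\<Sum>ix\<in>distinct_lists m {..<n}. G (entries_at ix d)) \<partial>iid {..<n} \<mu>)
      = (\<Sum>ix\<in>distinct_lists m {..<n}. \<integral>\<^sup>+d. indicator A d * G (entries_at [0..<m] d) \<partial>iid {..<n} \<mu>)"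
    unfolding sum_distrib_left by (subst nn_integral_sum) (simp_all cong: sum.cong)
  then show ?thesis
    by (simp add: A_def card_distinct_lists nn_integral_iid_prefix[OF assms])
qed

lemma pmf_size_biased:
  assumes "critical \<mu>"
  shows "pmf (size_biased \<mu>) k = real k * pmf \<mu> k"
proof -
  have "(\<integral>\<^sup>+k. ennreal (real k * pmf \<mu> k) \<partial>count_space UNIV) = (\<integral>\<^sup>+k. ennreal (real k) \<partial>measure_pmf \<mu>)"
    by (simp add: nn_integral_measure_pmf ennreal_mult mult.commute)
  with assms show ?thesis
    unfolding size_biased_def critical_def by (subst pmf_embed_pmf) auto
qed

lemma nn_integral_iid_size_biased:
  assumes "critical \<mu>" "finite I"
  shows "(\<integral>\<^sup>+k. F k \<partial>iid I (size_biased \<mu>)) = (\<integral>\<^sup>+k. ennreal (\<Prod>i\<in>I. real (k i)) * F k \<partial>iid I \<mu>)"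
proof -
  have "pmf (iid I (size_biased \<mu>)) k = (\<Prod>i\<in>I. real (k i)) * pmf (iid I \<mu>) k" for k
    using assms by (auto simp: iid_def pmf_Pi pmf_size_biased prod.distrib)
  then show ?thesis
    unfolding nn_integral_measure_pmf by (simp add: ennreal_mult prod_nonneg mult_ac)
qed

lemma Theta_nonneg: "0 \<le> Theta \<mu> n m k"
  unfolding Theta_def by (auto intro!: mult_nonneg_nonneg divide_nonneg_nonneg prod_nonneg)

lemma Theta_conv_sb_prefix_prob:
  "real (\<Prod>i<m. n - i) * sb_prefix_prob k (n - 1) [0..<m]
     * measure_pmf.prob (iid {m..<n} \<mu>) {x. (\<Sum>i<m. k i) + (\<Sum>i\<in>{m..<n}. x i) = n - 1}
     / measure_pmf.prob (iid {..<n} \<mu>) {x. (\<Sum>i<n. x i) = n - 1}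
   = (\<Prod>i<m. real (k i)) * Theta \<mu> n m k"
proof (cases "(\<Sum>i<m. k i) \<le> n - 1")
  case True
  then have "{x. (\<Sum>i<m. k i) + (\<Sum>i\<in>{m..<n}. x i) = n - 1} = {x. (\<Sum>i\<in>{m..<n}. x i) = n - 1 - (\<Sum>i<m. k i)}"
    by auto
  moreover have "real (\<Prod>i<m. n - i) * sb_prefix_prob k (n - 1) [0..<m]
      = (\<Prod>i<m. real (k i)) * (\<Prod>i<m. real (n - i) / real (n - 1 - (\<Sum>j<i. k j)))"
    by (simp add: sb_prefix_prob_conv_prod mult.commute flip: prod.distrib)
  ultimately show ?thesis
    using True by (simp add: Theta_def)
next
  case False
  then have "{x. (\<Sum>i<m. k i) + (\<Sum>i\<in>{m..<n}. x i) = n - 1} = {}"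
    by auto
  with False show ?thesis
    by (simp add: Theta_def)
qed

lemma nn_integral_sb_prefix_prob_conv_Theta:
  fixes F :: "(nat \<Rightarrow> nat) \<Rightarrow> real"
  assumes Z_pos: "0 < measure_pmf.prob (iid {..<n} \<mu>) {x. (\<Sum>i<n. x i) = n - 1}"
    and F_nonneg: "\<And>k. 0 \<le> F k"
  shows "of_nat (\<Prod>i<m. n - i)
           * (\<integral>\<^sup>+k. ennreal (sb_prefix_prob k (n - 1) [0..<m] * F k)
                 * emeasure (iid {m..<n} \<mu>) {x. (\<Sum>i<m. k i) + (\<Sum>i\<in>{m..<n}. x i) = n - 1}
               \<partial>iid {..<m} \<mu>)
           / ennreal (measure_pmf.prob (iid {..<n} \<mu>) {x. (\<Sum>i<n. x i) = n - 1})
       = (\<integral>\<^sup>+k. ennreal (\<Prod>i<m. real (k i)) * ennreal (F k * Theta \<mu> n m k) \<partial>iid {..<m} \<mu>)"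
proof -
  define Z where "Z = measure_pmf.prob (iid {..<n} \<mu>) {x. (\<Sum>i<n. x i) = n - 1}"
  define E where "E k = measure_pmf.prob (iid {m..<n} \<mu>) {x. (\<Sum>i<m. k i) + (\<Sum>i\<in>{m..<n}. x i) = n - 1}"
    for k :: "nat \<Rightarrow> nat"
  have pointwise: "of_nat (\<Prod>i<m. n - i) * (ennreal (sb_prefix_prob k (n - 1) [0..<m] * F k) * E k) / Z
      = ennreal (\<Prod>i<m. real (k i)) * ennreal (F k * Theta \<mu> n m k)" for k
  proof -
    have "real (\<Prod>i<m. n - i) * (sb_prefix_prob k (n - 1) [0..<m] * F k * E k) / Z
        = F k * (real (\<Prod>i<m. n - i) * sb_prefix_prob k (n - 1) [0..<m] * E k / Z)"
      by (simp add: divide_inverse mult_ac)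
    also have "\<dots> = (\<Prod>i<m. real (k i)) * (F k * Theta \<mu> n m k)"
      unfolding E_def Z_def Theta_conv_sb_prefix_prob by simp
    finally have "ennreal (real (\<Prod>i<m. n - i) * (sb_prefix_prob k (n - 1) [0..<m] * F k * E k) / Z)
        = ennreal ((\<Prod>i<m. real (k i)) * (F k * Theta \<mu> n m k))"
      by (rule arg_cong)
    then show ?thesis
      using Z_pos sb_prefix_prob_nonneg[of k "n - 1" "[0..<m]"] F_nonneg[of k] Theta_nonneg[of \<mu> n m k]
      by (simp add: Z_def E_def ennreal_of_nat_eq_real_of_nat ennreal_mult prod_nonneg mult_ac
               flip: divide_ennreal)
  qed
  have "of_nat (\<Prod>i<m. n - i)
      * (\<integral>\<^sup>+k. ennreal (sb_prefix_prob k (n - 1) [0..<m] * F k) * E k \<partial>iid {..<m} \<mu>) / Z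
      = (\<integral>\<^sup>+k. of_nat (\<Prod>i<m. n - i) * (ennreal (sb_prefix_prob k (n - 1) [0..<m] * F k) * E k) / Z
          \<partial>iid {..<m} \<mu>)"
    by (simp add: nn_integral_cmult nn_integral_divide)
  also have "\<dots> = (\<integral>\<^sup>+k. ennreal (\<Prod>i<m. real (k i)) * ennreal (F k * Theta \<mu> n m k) \<partial>iid {..<m} \<mu>)"
    by (intro nn_integral_cong pointwise)
  finally show ?thesis
    by (simp add: E_def Z_def measure_pmf.emeasure_eq_measure)
qed

theorem proposition4p3:
  fixes \<mu> :: "nat pmf" and n m :: nat and f :: "int list \<Rightarrow> real"
  assumes crit: "critical \<mu>"
    and gcd1: "aperiodic_support \<mu>"
    and wd: "measure_pmf.prob (iid {..<n} \<mu>) {x. (\<Sum>i<n. x i) = n - 1} > 0"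
    and m1: "1 \<le> m" and mn: "m < n"
    and fnn: "\<And>x. f x \<ge> 0"
  shows "(\<integral>\<^sup>+ d. (\<Sum>\<sigma>\<in>{\<sigma>. \<sigma> permutes {..<length (pos_entries n d)}}.
              ennreal (sb_perm_prob (pos_entries n d) \<sigma>
                * (if m \<le> length (pos_entries n d)
                   then f (map (\<lambda>i. int (pos_entries n d ! \<sigma> i)) [0..<m]) else 0)))
           \<partial>measure_pmf (Dn_law \<mu> n))
       = (\<integral>\<^sup>+ k. ennreal (f (map (\<lambda>i. int (k i)) [0..<m]) * Theta \<mu> n m k)
           \<partial>measure_pmf (iid {..<m} (size_biased \<mu>)))"
proof -
  define A where "A = {d :: nat \<Rightarrow> nat. (\<Sum>i<n. d i) = n - 1}"
  define F where "F k = f (map (\<lambda>i. int (k i)) [0..<m])" for k :: "nat \<Rightarrow> nat"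
  define g where "g k = ennreal (sb_prefix_prob k (n - 1) [0..<m] * F k)" for k
  have "(\<integral>\<^sup>+ d. (\<Sum>\<sigma>\<in>{\<sigma>. \<sigma> permutes {..<length (pos_entries n d)}}.
              ennreal (sb_perm_prob (pos_entries n d) \<sigma>
                * (if m \<le> length (pos_entries n d)
                   then f (map (\<lambda>i. int (pos_entries n d ! \<sigma> i)) [0..<m]) else 0)))
           \<partial>measure_pmf (Dn_law \<mu> n))
      = (\<integral>\<^sup>+ d. indicator A d * (\<Sum>ix\<in>distinct_lists m {..<n}. g (entries_at ix d)) \<partial>iid {..<n} \<mu>)
          / ennreal (measure_pmf.prob (iid {..<n} \<mu>) A)"
    unfolding Dn_law_def A_def[symmetric] nn_integral_cond_pmf[OF wd[folded A_def]]
    by (auto simp: sum_sb_reordering_conv_entries_at fnn g_def F_def A_def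
             split: split_indicator intro!: nn_integral_cong arg_cong2[where f = "(/)"])
  also have "\<dots> = of_nat (\<Prod>i<m. n - i)
      * (\<integral>\<^sup>+k. g k * emeasure (iid {m..<n} \<mu>) {x. (\<Sum>i<m. k i) + (\<Sum>i\<in>{m..<n}. x i) = n - 1}
           \<partial>iid {..<m} \<mu>)
      / ennreal (measure_pmf.prob (iid {..<n} \<mu>) A)"
    unfolding A_def nn_integral_iid_sum_entries_at[OF less_imp_le[OF mn], where G = g] ..
  also have "\<dots> = (\<integral>\<^sup>+k. ennreal (\<Prod>i<m. real (k i)) * ennreal (F k * Theta \<mu> n m k) \<partial>iid {..<m} \<mu>)"
    unfolding g_def A_def by (rule nn_integral_sb_prefix_prob_conv_Theta[OF wd]) (simp add: F_def fnn)
  also have "\<dots> = (\<integral>\<^sup>+ k. ennreal (F k * Theta \<mu> n m k) \<partial>iid {..<m} (size_biased \<mu>))"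
    by (simp add: nn_integral_iid_size_biased[OF crit])
  finally show ?thesis by (simp add: F_def)
qed

end
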